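(* For any state $\eta$ of $R$, any state $\tau$ of $A$ and any $p\in[0,1]$, with $\Lambda_p(\eta):=p\eta+(1-p)\mathbb{1}/d$ and $d=d_R$, $$\Phi_{\Lambda_p(\eta)}(\tau)=p\,\Phi_\eta(\tau)+(1-p)\,\Phi_{\mathbb{1}/d}(\tau)=p\,\Phi_\eta(\tau)+\frac{1-p}{d}.$$
   Context: $G$ is a compact group with normalized Haar measure $dg$; finite-dimensional systems $A,R$ carry continuous unitary representations $U_A,U_R$. On $RA$, $\mathcal{G}(M)=\int dg\,(U_R(g)\otimes U_A(g))M(U_R(g)\otimes U_A(g))^\dagger$. $\Phi_\eta(\tau):=\inf_{X\ge0}\{\mathrm{tr}[X]:\mathbb{1}_R\otimes X-\mathcal{G}(\eta\otimes\tau)\ge0\}$. *)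

theory Defs
  imports "HOL-Analysis.Analysis" "HOL-Algebra.Group"
begin

text \<open>Operators on a finite-dimensional Hilbert space with orthonormal basis indexed by a
finite type 'i are represented as complex matrices  'i => 'i => complex.\<close>

type_synonym 'i op = "'i \<Rightarrow> 'i \<Rightarrow> complex"

definition mmult :: "'i::finite op \<Rightarrow> 'i op \<Rightarrow> 'i op" where
  "mmult M N = (\<lambda>i k. \<Sum>j\<in>UNIV. M i j * N j k)"

definition adj :: "'i op \<Rightarrow> 'i op" where
  "adj M = (\<lambda>i j. cnj (M j i))"

definition idop :: "'i op" where
  "idop = (\<lambda>i j. if i = j then 1 else 0)"

definition tensor :: "'r op \<Rightarrow> 'a op \<Rightarrow> ('r \<times> 'a) op" where
  "tensor M N = (\<lambda>(i, a) (j, b). M i j * N a b)"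

definition trace :: "'i::finite op \<Rightarrow> complex" where
  "trace M = (\<Sum>i\<in>UNIV. M i i)"

definition psd :: "'i::finite op \<Rightarrow> bool" where
  "psd M = (\<forall>v :: 'i \<Rightarrow> complex.
      Im (\<Sum>i\<in>UNIV. \<Sum>j\<in>UNIV. cnj (v i) * M i j * v j) = 0 \<and>
      Re (\<Sum>i\<in>UNIV. \<Sum>j\<in>UNIV. cnj (v i) * M i j * v j) \<ge> 0)"

definition state :: "'i::finite op \<Rightarrow> bool" where
  "state M = (psd M \<and> trace M = 1)"

definition unitary_op :: "'i::finite op \<Rightarrow> bool" where
  "unitary_op U = (mmult U (adj U) = idop \<and> mmult (adj U) U = idop)"

definition compact_group_haar ::
  "('g, 'b) monoid_scheme \<Rightarrow> 'g topology \<Rightarrow> 'g measure \<Rightarrow> bool" where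
  "compact_group_haar G T \<mu> =
    (group G \<and> topspace T = carrier G \<and> compact_space T \<and> Hausdorff_space T \<and>
     continuous_map (prod_topology T T) T (\<lambda>(x, y). x \<otimes>\<^bsub>G\<^esub> y) \<and>
     continuous_map T T (\<lambda>x. inv\<^bsub>G\<^esub> x) \<and>
     emeasure \<mu> (space \<mu>) = 1 \<and> space \<mu> = carrier G \<and>
     sets \<mu> = sigma_sets (topspace T) {S. openin T S} \<and>
     (\<forall>g\<in>carrier G. \<forall>B\<in>sets \<mu>.
        emeasure \<mu> ((\<lambda>x. g \<otimes>\<^bsub>G\<^esub> x) ` B) = emeasure \<mu> B \<and>
        emeasure \<mu> ((\<lambda>x. x \<otimes>\<^bsub>G\<^esub> g) ` B) = emeasure \<mu> B) \<and>
     (\<forall>B\<in>sets \<mu>. emeasure \<mu> B = (INF U\<in>{U. openin T U \<and> B \<subseteq> U}. emeasure \<mu> U)) \<and>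
     (\<forall>U. openin T U \<longrightarrow>
        emeasure \<mu> U = (SUP K\<in>{K. compactin T K \<and> K \<subseteq> U}. emeasure \<mu> K)))"

definition unitary_rep ::
  "('g, 'b) monoid_scheme \<Rightarrow> 'g topology \<Rightarrow> ('g \<Rightarrow> 'i::finite op) \<Rightarrow> bool" where
  "unitary_rep G T U =
    ((\<forall>g\<in>carrier G. unitary_op (U g)) \<and>
     U \<one>\<^bsub>G\<^esub> = idop \<and>
     (\<forall>g\<in>carrier G. \<forall>h\<in>carrier G. U (g \<otimes>\<^bsub>G\<^esub> h) = mmult (U g) (U h)) \<and>
     (\<forall>i j. continuous_map T euclidean (\<lambda>g. U g i j)))"

definition twirl ::
  "'g measure \<Rightarrow> ('g \<Rightarrow> 'r::finite op) \<Rightarrow> ('g \<Rightarrow> 'a::finite op) \<Rightarrow> ('r \<times> 'a) op \<Rightarrow> ('r \<times> 'a) op" where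
  "twirl \<mu> UR UA M = (\<lambda>x y. integral\<^sup>L \<mu>
      (\<lambda>g. mmult (mmult (tensor (UR g) (UA g)) M) (adj (tensor (UR g) (UA g))) x y))"

text \<open>Phi_eta(tau) = inf { tr X : X \<ge> 0, 1_R \<otimes> X - G(eta \<otimes> tau) \<ge> 0 }.
  (tr X is real for X \<ge> 0; we take its real part.)\<close>
definition Phi ::
  "'g measure \<Rightarrow> ('g \<Rightarrow> 'r::finite op) \<Rightarrow> ('g \<Rightarrow> 'a::finite op) \<Rightarrow> 'r op \<Rightarrow> 'a op \<Rightarrow> real" where
  "Phi \<mu> UR UA \<eta> \<tau> = Inf {Re (trace X) | X :: 'a op. psd X \<and>
      psd (\<lambda>x y. tensor (idop :: 'r op) X x y - twirl \<mu> UR UA (tensor \<eta> \<tau>) x y)}"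

definition depol :: "real \<Rightarrow> 'r::finite op \<Rightarrow> 'r op" where
  "depol p \<eta> = (\<lambda>i j. complex_of_real p * \<eta> i j +
      complex_of_real ((1 - p) / real CARD('r)) * idop i j)"

definition maxmixed :: "'r::finite op" where
  "maxmixed = (\<lambda>i j. idop i j / complex_of_real (real CARD('r)))"

end

theory Submission
  imports Defs
begin

text \<open>The twirl is linear and, \<open>U\<^sub>R(g)\<close> being unitary, maps \<open>1 \<otimes> \<tau>\<close> to \<open>1 \<otimes> S\<close>, where
  \<open>S\<close> is the twirl of \<open>\<tau>\<close> under \<open>U\<^sub>A\<close> alone, again a state. Hence
  \<open>\<G>(\<Lambda>\<^sub>p(\<eta>) \<otimes> \<tau>) = p \<G>(\<eta> \<otimes> \<tau>) + (1 - p)/d \<cdot> 1 \<otimes> S\<close>, and for \<open>p > 0\<close> the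
  substitution \<open>X = p Y + (1 - p)/d \<cdot> S\<close> is a bijection from the feasible \<open>Y\<close> for \<open>\<eta>\<close> onto the
  feasible \<open>X\<close> for \<open>\<Lambda>\<^sub>p(\<eta>)\<close>, changing the trace by \<open>t \<mapsto> p t + (1 - p)/d\<close>; the infimum
  follows along. The constraint \<open>X \<ge> 0\<close> needs no care of its own: \<open>1 \<otimes> Y \<ge> \<G>(\<eta> \<otimes> \<tau>)\<close>
  already forces \<open>Y \<ge> 0\<close>, because \<open>\<G>(\<eta> \<otimes> \<tau>)\<close> is positive on product vectors. Running the
  same argument with \<open>\<G>(\<eta> \<otimes> \<tau>)\<close> replaced by \<open>0\<close> gives \<open>\<Phi>\<^bsub>1/d\<^esub>(\<tau>) = tr S / d = 1/d\<close>,
  which also covers \<open>p = 0\<close>.\<close>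

section \<open>Quadratic forms and positive semidefiniteness\<close>

definition qform :: "'i::finite op \<Rightarrow> ('i \<Rightarrow> complex) \<Rightarrow> complex" where
  "qform M v = (\<Sum>i\<in>UNIV. \<Sum>j\<in>UNIV. cnj (v i) * M i j * v j)"

definition sesq :: "'i::finite op \<Rightarrow> ('i \<Rightarrow> complex) \<Rightarrow> ('i \<Rightarrow> complex) \<Rightarrow> complex" where
  "sesq M u w = (\<Sum>i\<in>UNIV. \<Sum>j\<in>UNIV. cnj (u i) * M i j * w j)"

definition hermitian :: "'i op \<Rightarrow> bool" where
  "hermitian M \<longleftrightarrow> adj M = M"

lemma hermitian_iff: "hermitian M \<longleftrightarrow> (\<forall>i j. cnj (M j i) = M i j)"
  by (auto simp: hermitian_def adj_def fun_eq_iff)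

lemma psd_iff_qform: "psd M \<longleftrightarrow> (\<forall>v. qform M v \<in> \<real>\<^sub>\<ge>\<^sub>0)"
  by (auto simp: psd_def qform_def complex_nonneg_Reals_iff)

lemma qform_add: "qform (\<lambda>x y. A x y + B x y) v = qform A v + qform B v"
  by (simp add: qform_def algebra_simps sum.distrib)

lemma qform_diff: "qform (\<lambda>x y. A x y - B x y) v = qform A v - qform B v"
  by (simp add: qform_def algebra_simps sum_subtractf)

lemma qform_scale: "qform (\<lambda>x y. c * A x y) v = c * qform A v"
  by (simp add: qform_def algebra_simps sum_distrib_left)

lemma psd_add: "psd A \<Longrightarrow> psd B \<Longrightarrow> psd (\<lambda>x y. A x y + B x y)"
  by (simp add: psd_iff_qform qform_add)

lemma psd_scale: "0 \<le> c \<Longrightarrow> psd A \<Longrightarrow> psd (\<lambda>x y. complex_of_real c * A x y)"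
  by (simp add: psd_iff_qform qform_scale)

lemma psd_scale_iff:
  assumes "0 < c"
  shows "psd (\<lambda>x y. complex_of_real c * A x y) \<longleftrightarrow> psd A"
  using assms by (auto simp: psd_iff_qform qform_scale complex_nonneg_Reals_iff zero_le_mult_iff)

lemma psd_zero: "psd (\<lambda>x y. 0)"
  by (simp add: psd_def)

lemma sum_mult_idop: "(\<Sum>j\<in>UNIV. f j * idop i j) = f (i::'i::finite)"
  by (simp add: idop_def if_distrib[of "\<lambda>x. _ * x"] cong: if_cong)

lemma sum_idop_mult: "(\<Sum>j\<in>UNIV. idop i j * f j) = f (i::'i::finite)"
  using sum_mult_idop[of f i] by (simp add: mult.commute)

lemma cnj_idop [simp]: "cnj (idop i j) = idop i j"
  by (simp add: idop_def)

lemma sesq_idop: "sesq M (idop i) (idop j) = M i j"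
  by (simp add: sesq_def sum_mult_idop sum_idop_mult)

lemma qform_sesq_expand:
  "qform M (\<lambda>k. u k + z * w k) = sesq M u u + z * sesq M u w + cnj z * sesq M w u + cnj z * z * sesq M w w"
  by (simp add: qform_def sesq_def algebra_simps sum.distrib sum_distrib_left)

lemma qform_eq_sesq: "qform M v = sesq M v v"
  by (simp add: qform_def sesq_def)

lemma qform_idop_unit: "qform M (idop i) = M i i"
  by (simp add: qform_eq_sesq sesq_idop)

lemma qform_idop: "qform idop v = complex_of_real (\<Sum>i\<in>UNIV. (norm (v i))\<^sup>2)"
proof -
  have "qform idop v = (\<Sum>i\<in>UNIV. cnj (v i) * v i)"
    by (simp add: qform_def mult.assoc sum_idop_mult flip: sum_distrib_left)
  then show ?thesis
    by (simp only: of_real_sum complex_norm_square mult.commute)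
qed

lemma psd_idop: "psd idop"
  unfolding psd_iff_qform qform_idop nonneg_Reals_of_real_iff by (simp add: sum_nonneg)

lemma psd_hermitian:
  assumes "psd M"
  shows "hermitian M"
  unfolding hermitian_iff
proof (intro allI)
  fix i j
  have real: "Im (qform M v) = 0" for v
    using assms by (simp add: psd_def qform_def)
  have "Im (M k k) = 0" for k
    using real[of "idop k"] by (simp add: qform_idop_unit)
  moreover have "Im (M i j) + Im (M j i) = 0"
    using real[of "\<lambda>k. idop i k + 1 * idop j k"] \<open>Im (M i i) = 0\<close> \<open>Im (M j j) = 0\<close>
    unfolding qform_sesq_expand sesq_idop by simp
  moreover have "Re (M i j) - Re (M j i) = 0"
    using real[of "\<lambda>k. idop i k + \<i> * idop j k"] \<open>Im (M i i) = 0\<close> \<open>Im (M j j) = 0\<close>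
    unfolding qform_sesq_expand sesq_idop by simp
  ultimately show "cnj (M j i) = M i j"
    by (simp add: complex_eq_iff)
qed

lemma hermitian_qform_real:
  assumes "hermitian M"
  shows "qform M v \<in> \<real>"
proof -
  have herm: "cnj (M i j) = M j i" for i j
    using assms by (simp add: hermitian_iff)
  have "cnj (qform M v) = (\<Sum>i\<in>UNIV. \<Sum>j\<in>UNIV. v i * M j i * cnj (v j))"
    by (simp add: qform_def herm)
  also have "\<dots> = qform M v"
    unfolding qform_def by (subst sum.swap) (simp add: mult_ac)
  finally show ?thesis
    by (simp add: Reals_cnj_iff)
qed

lemma psd_diag_nonneg:
  assumes "psd X"
  shows "0 \<le> Re (X i i)"
proof -
  have "qform X (idop i) \<in> \<real>\<^sub>\<ge>\<^sub>0"
    using assms by (simp add: psd_iff_qform)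
  then show ?thesis
    by (simp add: qform_idop_unit complex_nonneg_Reals_iff)
qed

lemma psd_trace_nonneg: "psd X \<Longrightarrow> 0 \<le> Re (trace X)"
  by (simp add: trace_def sum_nonneg psd_diag_nonneg)

lemma trace_linear: "trace (\<lambda>i j. a * A i j + b * B i j) = a * trace A + b * trace B"
  by (simp add: trace_def sum.distrib sum_distrib_left)

lemma psd_hermitian_shift:
  fixes N :: "'i::finite op"
  assumes "hermitian N" and bound: "\<And>i j. norm (N i j) \<le> B"
  shows "psd (\<lambda>i j. complex_of_real (B * CARD('i)) * idop i j - N i j)"
  unfolding psd_iff_qform
proof
  fix v :: "'i \<Rightarrow> complex"
  let ?n = "\<lambda>i. norm (v i)"
  have "B \<ge> 0"
    using bound[of undefined undefined] norm_ge_zero order_trans by blast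
  have "Re (qform N v) \<le> (\<Sum>i\<in>UNIV. \<Sum>j\<in>UNIV. norm (cnj (v i) * N i j * v j))"
    unfolding qform_def
    by (rule order_trans[OF complex_Re_le_cmod order_trans[OF norm_sum sum_mono[OF norm_sum]]])
  also have "\<dots> \<le> (\<Sum>i\<in>UNIV. \<Sum>j\<in>UNIV. B / 2 * ((?n i)\<^sup>2 + (?n j)\<^sup>2))"
  proof (intro sum_mono)
    fix i j
    have "B * (?n i * ?n j) \<le> B * (((?n i)\<^sup>2 + (?n j)\<^sup>2) / 2)"
      using sum_squares_bound[of "?n i" "?n j"] \<open>B \<ge> 0\<close> by (intro mult_left_mono) auto
    then have "B * (?n i * ?n j) \<le> B / 2 * ((?n i)\<^sup>2 + (?n j)\<^sup>2)"
      by (simp add: field_simps)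
    moreover have "norm (N i j) * (?n i * ?n j) \<le> B * (?n i * ?n j)"
      by (intro mult_right_mono bound) simp
    ultimately show "norm (cnj (v i) * N i j * v j) \<le> B / 2 * ((?n i)\<^sup>2 + (?n j)\<^sup>2)"
      by (simp add: norm_mult mult_ac)
  qed
  also have "\<dots> = B / 2 * (\<Sum>i\<in>UNIV. \<Sum>j\<in>UNIV. (?n i)\<^sup>2 + (?n j)\<^sup>2)"
    by (simp add: sum_distrib_left)
  also have "\<dots> = B * CARD('i) * (\<Sum>i\<in>UNIV. (?n i)\<^sup>2)"
    by (simp add: sum.distrib flip: sum_distrib_left)
  finally have "Re (qform N v) \<le> B * CARD('i) * (\<Sum>i\<in>UNIV. (?n i)\<^sup>2)" .
  moreover have "Im (qform N v) = 0"
    using hermitian_qform_real[OF assms(1)] by (simp add: complex_is_Real_iff)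
  ultimately show "qform (\<lambda>i j. complex_of_real (B * CARD('i)) * idop i j - N i j) v \<in> \<real>\<^sub>\<ge>\<^sub>0"
    by (simp add: qform_diff qform_scale qform_idop complex_nonneg_Reals_iff)
qed

lemma tensor_app: "tensor M N x y = M (fst x) (fst y) * N (snd x) (snd y)"
  by (cases x, cases y) (simp add: tensor_def)

lemma sum_UNIV_prod:
  "(\<Sum>x\<in>UNIV. f x) = (\<Sum>r\<in>UNIV. \<Sum>a\<in>UNIV. f (r, a))"
  by (simp add: UNIV_Times_UNIV[symmetric] sum.cartesian_product del: UNIV_Times_UNIV)

definition vtensor :: "('r \<Rightarrow> complex) \<Rightarrow> ('a \<Rightarrow> complex) \<Rightarrow> 'r \<times> 'a \<Rightarrow> complex" where
  "vtensor u w = (\<lambda>(r, a). u r * w a)"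

definition mvmult :: "'i::finite op \<Rightarrow> ('i \<Rightarrow> complex) \<Rightarrow> 'i \<Rightarrow> complex" where
  "mvmult A v = (\<lambda>i. \<Sum>j\<in>UNIV. A i j * v j)"

lemma mmult_conj_expand:
  "mmult (mmult W M) (adj W) x y = (\<Sum>k\<in>UNIV. \<Sum>l\<in>UNIV. W x k * M k l * cnj (W y l))"
  unfolding mmult_def adj_def by (simp add: sum_distrib_right) (rule sum.swap)

lemma sum_swap_nested:
  "(\<Sum>i\<in>A. \<Sum>j\<in>B. \<Sum>k\<in>C. \<Sum>l\<in>D. f i j k l) = (\<Sum>k\<in>C. \<Sum>l\<in>D. \<Sum>i\<in>A. \<Sum>j\<in>B. f i j k l)"
proof -
  have "(\<Sum>i\<in>A. \<Sum>j\<in>B. \<Sum>k\<in>C. \<Sum>l\<in>D. f i j k l) = (\<Sum>i\<in>A. \<Sum>k\<in>C. \<Sum>j\<in>B. \<Sum>l\<in>D. f i j k l)"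
    by (intro sum.cong refl sum.swap)
  also have "\<dots> = (\<Sum>k\<in>C. \<Sum>i\<in>A. \<Sum>j\<in>B. \<Sum>l\<in>D. f i j k l)"
    by (rule sum.swap)
  also have "\<dots> = (\<Sum>k\<in>C. \<Sum>i\<in>A. \<Sum>l\<in>D. \<Sum>j\<in>B. f i j k l)"
    by (intro sum.cong refl sum.swap)
  also have "\<dots> = (\<Sum>k\<in>C. \<Sum>l\<in>D. \<Sum>i\<in>A. \<Sum>j\<in>B. f i j k l)"
    by (intro sum.cong refl sum.swap)
  finally show ?thesis .
qed

lemma qform_mmult_adj: "qform (mmult (mmult W M) (adj W)) v = qform M (mvmult (adj W) v)"
proof -
  have "qform (mmult (mmult W M) (adj W)) v = (\<Sum>i\<in>UNIV. \<Sum>j\<in>UNIV. \<Sum>k\<in>UNIV. \<Sum>l\<in>UNIV.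
      (W i k * cnj (v i)) * M k l * (cnj (W j l) * v j))"
    by (simp add: qform_def mmult_conj_expand sum_distrib_left sum_distrib_right mult_ac)
  also have "\<dots> = (\<Sum>k\<in>UNIV. \<Sum>l\<in>UNIV. \<Sum>j\<in>UNIV. \<Sum>i\<in>UNIV.
      (W i k * cnj (v i)) * M k l * (cnj (W j l) * v j))"
    by (subst sum_swap_nested) (intro sum.cong refl sum.swap)
  also have "\<dots> = qform M (mvmult (adj W) v)"
    unfolding qform_def mvmult_def adj_def by (simp add: sum_distrib_left sum_distrib_right)
  finally show ?thesis .
qed

lemma mmult_assoc: "mmult (mmult A B) C = mmult A (mmult B C)"
  by (simp add: fun_eq_iff mmult_def sum_distrib_left sum_distrib_right mult.assoc) (intro allI sum.swap)

lemma mmult_idop_left: "mmult idop A = A"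
  by (simp add: fun_eq_iff mmult_def sum_idop_mult)

lemma mmult_idop_right: "mmult A idop = A"
  by (simp add: fun_eq_iff mmult_def idop_def if_distrib[of "\<lambda>x. _ * x"] cong: if_cong)

lemma trace_mmult_commute: "trace (mmult A B) = trace (mmult B A)"
  by (simp add: trace_def mmult_def mult.commute) (rule sum.swap)

lemma trace_unitary_conj: "unitary_op W \<Longrightarrow> trace (mmult (mmult W M) (adj W)) = trace M"
  by (simp add: trace_mmult_commute[of _ "adj W"] mmult_assoc[symmetric] unitary_op_def
      mmult_idop_left)

lemma mmult_tensor: "mmult (tensor A B) (tensor C D) = tensor (mmult A C) (mmult B D)"
  by (auto simp: fun_eq_iff mmult_def tensor_def sum_UNIV_prod sum_product mult_ac)

lemma adj_tensor: "adj (tensor A B) = tensor (adj A) (adj B)"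
  by (auto simp: fun_eq_iff adj_def tensor_def)

lemma tensor_idop_idop: "tensor idop idop = idop"
  by (auto simp: fun_eq_iff tensor_def idop_def)

lemma unitary_tensor: "unitary_op U \<Longrightarrow> unitary_op V \<Longrightarrow> unitary_op (tensor U V)"
  by (simp add: unitary_op_def adj_tensor mmult_tensor tensor_idop_idop)

lemma mvmult_tensor: "mvmult (tensor A B) (vtensor u w) = vtensor (mvmult A u) (mvmult B w)"
  by (auto simp: fun_eq_iff mvmult_def tensor_def vtensor_def sum_UNIV_prod sum_product mult_ac)

lemma unitary_entry_bound:
  assumes "unitary_op U"
  shows "norm (U i j) \<le> 1"
proof -
  have "(\<Sum>k\<in>UNIV. cnj (U k j) * U k j) = 1"
    using fun_cong[OF fun_cong[OF conjunct2[OF assms[unfolded unitary_op_def]]], of j j]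
    by (simp add: mmult_def adj_def idop_def)
  then have "complex_of_real (\<Sum>k\<in>UNIV. (norm (U k j))\<^sup>2) = 1"
    by (simp only: of_real_sum complex_norm_square mult.commute)
  then have "(\<Sum>k\<in>UNIV. (norm (U k j))\<^sup>2) = 1"
    by (simp only: of_real_eq_1_iff)
  moreover have "(norm (U i j))\<^sup>2 \<le> (\<Sum>k\<in>UNIV. (norm (U k j))\<^sup>2)"
    by (rule member_le_sum) auto
  ultimately show ?thesis
    by (simp add: power_le_one_iff)
qed

section \<open>Block positivity\<close>

text \<open>Shown for the twirl of \<open>\<eta> \<otimes> \<tau>\<close> in place of full positivity, which for a tensor
  product of positive matrices would need their square roots.\<close>
definition block_positive :: "('r::finite \<times> 'a::finite) op \<Rightarrow> bool" where
  "block_positive M \<longleftrightarrow> (\<forall>u w. qform M (vtensor u w) \<in> \<real>\<^sub>\<ge>\<^sub>0)"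

lemma qform_tensor: "qform (tensor A B) (vtensor u w) = qform A u * qform B w"
  by (simp add: qform_def vtensor_def tensor_def sum_UNIV_prod sum_product mult_ac)

lemma hermitian_tensor: "hermitian A \<Longrightarrow> hermitian B \<Longrightarrow> hermitian (tensor A B)"
  by (simp add: hermitian_def adj_tensor)

lemma block_positive_tensor: "psd A \<Longrightarrow> psd B \<Longrightarrow> block_positive (tensor A B)"
  by (simp add: block_positive_def psd_iff_qform qform_tensor)

lemma psd_of_tensor_idop_ge:
  fixes T :: "('r::finite \<times> 'a::finite) op"
  assumes "block_positive T" and "psd (\<lambda>x y. tensor idop Y x y - T x y)"
  shows "psd Y"
  unfolding psd_iff_qform
proof
  fix w
  define u :: "'r \<Rightarrow> complex" where "u = idop undefined"
  have "qform idop u = 1"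
    unfolding u_def qform_idop_unit by (simp add: idop_def)
  then have "qform (tensor idop Y) (vtensor u w) = qform Y w"
    by (simp add: qform_tensor)
  then have "qform Y w = qform (\<lambda>x y. tensor idop Y x y - T x y) (vtensor u w) + qform T (vtensor u w)"
    by (simp add: qform_diff)
  then show "qform Y w \<in> \<real>\<^sub>\<ge>\<^sub>0"
    using assms by (simp add: psd_iff_qform block_positive_def)
qed

section \<open>Averaging over a family of unitaries\<close>

definition twirl_by :: "'g measure \<Rightarrow> ('g \<Rightarrow> 'i::finite op) \<Rightarrow> 'i op \<Rightarrow> 'i op" where
  "twirl_by \<mu> W M = (\<lambda>x y. integral\<^sup>L \<mu> (\<lambda>g. mmult (mmult (W g) M) (adj (W g)) x y))"

definition unitary_family :: "'g measure \<Rightarrow> ('g \<Rightarrow> 'i::finite op) \<Rightarrow> bool" where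
  "unitary_family \<mu> W \<longleftrightarrow> emeasure \<mu> (space \<mu>) = 1 \<and>
     (\<forall>i j. (\<lambda>g. W g i j) \<in> borel_measurable \<mu>) \<and> (\<forall>g\<in>space \<mu>. unitary_op (W g))"

lemma twirl_eq_twirl_by: "twirl \<mu> UR UA = twirl_by \<mu> (\<lambda>g. tensor (UR g) (UA g))"
  by (simp add: fun_eq_iff twirl_def twirl_by_def)

lemma unitary_family_finite_measure: "unitary_family \<mu> W \<Longrightarrow> finite_measure \<mu>"
  by (auto simp: unitary_family_def intro: finite_measureI)

lemma unitary_family_integral_const:
  assumes "unitary_family \<mu> W"
  shows "(\<integral>g. c \<partial>\<mu>) = (c :: complex)"
proof -
  have "measure \<mu> (space \<mu>) = 1"
    using assms by (simp add: unitary_family_def measure_def)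
  then show ?thesis
    by simp
qed

lemma unitary_family_integrable:
  assumes "unitary_family \<mu> W"
  shows "integrable \<mu> (\<lambda>g. mmult (mmult (W g) M) (adj (W g)) x y)"
proof -
  interpret finite_measure \<mu>
    using assms by (rule unitary_family_finite_measure)
  have entries: "integrable \<mu> (\<lambda>g. W g x k * cnj (W g y l))" for k l
  proof (rule integrable_const_bound[where B = 1])
    show "AE g in \<mu>. norm (W g x k * cnj (W g y l)) \<le> 1"
      using assms by (auto simp: unitary_family_def norm_mult unitary_entry_bound intro!: mult_le_one)
    show "(\<lambda>g. W g x k * cnj (W g y l)) \<in> borel_measurable \<mu>"
      using assms unfolding unitary_family_def
      by (intro borel_measurable_times borel_measurable_continuous_on[where f = cnj] continuous_intros) auto
  qed
  have "mmult (mmult (W g) M) (adj (W g)) x y = (\<Sum>k\<in>UNIV. \<Sum>l\<in>UNIV. M k l * (W g x k * cnj (W g y l)))"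
    for g
    by (simp add: mmult_conj_expand mult_ac)
  then show ?thesis
    by (simp only:) (intro Bochner_Integration.integrable_sum integrable_mult_right entries)
qed

lemma qform_twirl_by:
  assumes "unitary_family \<mu> W"
  shows "qform (twirl_by \<mu> W M) v = (\<integral>g. qform M (mvmult (adj (W g)) v) \<partial>\<mu>)"
proof -
  have "qform (twirl_by \<mu> W M) v
      = (\<Sum>i\<in>UNIV. \<Sum>j\<in>UNIV. \<integral>g. cnj (v i) * mmult (mmult (W g) M) (adj (W g)) i j * v j \<partial>\<mu>)"
    by (simp add: qform_def twirl_by_def)
  also have "\<dots> = (\<integral>g. qform (mmult (mmult (W g) M) (adj (W g))) v \<partial>\<mu>)"
    unfolding qform_def using unitary_family_integrable[OF assms]
    by (simp add: Bochner_Integration.integral_sum)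
  finally show ?thesis
    by (simp only: qform_mmult_adj)
qed

lemma integral_in_nonneg_Reals:
  fixes f :: "'g \<Rightarrow> complex"
  assumes "\<And>x. x \<in> space M \<Longrightarrow> f x \<in> \<real>\<^sub>\<ge>\<^sub>0"
  shows "integral\<^sup>L M f \<in> \<real>\<^sub>\<ge>\<^sub>0"
proof -
  have "integral\<^sup>L M f = integral\<^sup>L M (\<lambda>x. complex_of_real (Re (f x)))"
    using assms by (intro Bochner_Integration.integral_cong) (auto simp: complex_nonneg_Reals_iff complex_eq_iff)
  moreover have "0 \<le> integral\<^sup>L M (\<lambda>x. Re (f x))"
    using assms by (intro integral_nonneg_AE AE_I2) (simp add: complex_nonneg_Reals_iff)
  ultimately show ?thesis
    by simp
qed

lemma psd_twirl_by: "unitary_family \<mu> W \<Longrightarrow> psd M \<Longrightarrow> psd (twirl_by \<mu> W M)"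
  by (simp add: psd_iff_qform qform_twirl_by integral_in_nonneg_Reals)

lemma block_positive_twirl_by:
  assumes "unitary_family \<mu> (\<lambda>g. tensor (U g) (V g))" and "block_positive M"
  shows "block_positive (twirl_by \<mu> (\<lambda>g. tensor (U g) (V g)) M)"
  using assms(2)
  by (simp add: block_positive_def qform_twirl_by[OF assms(1)] adj_tensor mvmult_tensor
      integral_in_nonneg_Reals)

lemma hermitian_twirl_by:
  assumes "hermitian M"
  shows "hermitian (twirl_by \<mu> W M)"
proof -
  have herm: "cnj (M k l) = M l k" for k l
    using assms by (simp add: hermitian_iff)
  have pointwise: "cnj (mmult (mmult (W g) M) (adj (W g)) y x) = mmult (mmult (W g) M) (adj (W g)) x y"
    for g x y
    unfolding mmult_conj_expand by (subst sum.swap) (simp add: herm mult_ac)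
  have "cnj (twirl_by \<mu> W M y x) = twirl_by \<mu> W M x y" for x y
    unfolding twirl_by_def Bochner_Integration.integral_cnj[symmetric] by (simp only: pointwise)
  then show ?thesis
    by (simp add: hermitian_iff)
qed

lemma trace_twirl_by:
  assumes "unitary_family \<mu> W"
  shows "trace (twirl_by \<mu> W M) = trace M"
proof -
  have "trace (twirl_by \<mu> W M) = (\<integral>g. trace (mmult (mmult (W g) M) (adj (W g))) \<partial>\<mu>)"
    unfolding trace_def twirl_by_def using unitary_family_integrable[OF assms]
    by (simp add: Bochner_Integration.integral_sum)
  also have "\<dots> = (\<integral>g. trace M \<partial>\<mu>)"
    using assms by (intro Bochner_Integration.integral_cong) (auto simp: unitary_family_def trace_unitary_conj)
  also have "\<dots> = trace M"
    using assms by (rule unitary_family_integral_const)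
  finally show ?thesis .
qed

lemma twirl_by_linear:
  assumes "unitary_family \<mu> W"
  shows "twirl_by \<mu> W (\<lambda>x y. a * M x y + b * N x y) = (\<lambda>x y. a * twirl_by \<mu> W M x y + b * twirl_by \<mu> W N x y)"
proof -
  have "mmult (mmult (W g) (\<lambda>x y. a * M x y + b * N x y)) (adj (W g)) x y
      = a * mmult (mmult (W g) M) (adj (W g)) x y + b * mmult (mmult (W g) N) (adj (W g)) x y" for g x y
    by (simp add: mmult_conj_expand algebra_simps sum.distrib sum_distrib_left)
  then show ?thesis
    using unitary_family_integrable[OF assms] by (simp add: fun_eq_iff twirl_by_def)
qed

lemma twirl_by_tensor_idop:
  assumes "\<And>g. g \<in> space \<mu> \<Longrightarrow> unitary_op (U g)"
  shows "twirl_by \<mu> (\<lambda>g. tensor (U g) (V g)) (tensor idop \<tau>) = tensor idop (twirl_by \<mu> V \<tau>)"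
proof -
  have pointwise: "mmult (mmult (tensor (U g) (V g)) (tensor idop \<tau>)) (adj (tensor (U g) (V g)))
      = tensor idop (mmult (mmult (V g) \<tau>) (adj (V g)))" if "g \<in> space \<mu>" for g
    using assms[OF that] by (simp add: mmult_tensor adj_tensor mmult_idop_right unitary_op_def)
  have "twirl_by \<mu> (\<lambda>g. tensor (U g) (V g)) (tensor idop \<tau>) x y
      = (\<integral>g. idop (fst x) (fst y) * mmult (mmult (V g) \<tau>) (adj (V g)) (snd x) (snd y) \<partial>\<mu>)" for x y
    unfolding twirl_by_def by (intro Bochner_Integration.integral_cong) (simp_all add: pointwise tensor_app)
  then show ?thesis
    by (simp add: fun_eq_iff twirl_by_def tensor_app)
qed

lemma measurable_of_continuous_map:
  assumes "space \<mu> = topspace T" and "sets \<mu> = sigma_sets (topspace T) {S. openin T S}"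
    and "continuous_map T euclidean f"
  shows "f \<in> borel_measurable \<mu>"
proof (rule borel_measurableI)
  fix S :: "'b set"
  assume "open S"
  then have "openin T {x \<in> topspace T. f x \<in> S}"
    using assms(3) by (simp add: openin_continuous_map_preimage)
  then show "f -` S \<inter> space \<mu> \<in> sets \<mu>"
    using assms(1,2) by (auto intro: sigma_sets.Basic simp: Int_def conj_commute)
qed

lemma unitary_family_rep:
  assumes "compact_group_haar G T \<mu>" and "unitary_rep G T U"
  shows "unitary_family \<mu> U"
proof -
  have "space \<mu> = carrier G" "topspace T = carrier G" "emeasure \<mu> (space \<mu>) = 1"
    "sets \<mu> = sigma_sets (topspace T) {S. openin T S}"
    using assms(1) unfolding compact_group_haar_def by blast+
  then show ?thesis
    using assms(2) unfolding unitary_family_def unitary_rep_def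
    by (metis measurable_of_continuous_map)
qed

lemma unitary_family_tensor:
  assumes "unitary_family \<mu> U" and "unitary_family \<mu> V"
  shows "unitary_family \<mu> (\<lambda>g. tensor (U g) (V g))"
proof -
  have "(\<lambda>g. tensor (U g) (V g) i j) \<in> borel_measurable \<mu>" for i j
    using assms unfolding unitary_family_def tensor_app by (auto intro: borel_measurable_times)
  then show ?thesis
    using assms unitary_tensor unfolding unitary_family_def by blast
qed

section \<open>The semidefinite program defining \<open>\<Phi>\<close>\<close>

definition sdp_values :: "('r::finite \<times> 'a::finite) op \<Rightarrow> real set" where
  "sdp_values T = {Re (trace X) | X :: 'a op. psd X \<and> psd (\<lambda>x y. tensor idop X x y - T x y)}"

lemma Phi_eq_Inf_sdp_values: "Phi \<mu> UR UA \<eta> \<tau> = Inf (sdp_values (twirl \<mu> UR UA (tensor \<eta> \<tau>)))"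
  by (simp add: Phi_def sdp_values_def)

lemma sdp_values_nonneg: "t \<in> sdp_values T \<Longrightarrow> 0 \<le> t"
  by (auto simp: sdp_values_def psd_trace_nonneg)

lemma sdp_values_nonempty:
  fixes T :: "('r::finite \<times> 'a::finite) op"
  assumes "hermitian T"
  shows "sdp_values T \<noteq> {}"
proof -
  define B where "B = (\<Sum>k\<in>UNIV. \<Sum>l\<in>UNIV. norm (T k l))"
  have bound: "norm (T k l) \<le> B" for k l
    unfolding B_def
    by (rule order_trans[OF member_le_sum[of l] member_le_sum[of k]]) (auto intro: sum_nonneg)
  have "0 \<le> B"
    unfolding B_def by (simp add: sum_nonneg)
  define X :: "'a op" where "X = (\<lambda>a b. complex_of_real (B * CARD('r \<times> 'a)) * idop a b)"
  have "psd X"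
    unfolding X_def using \<open>0 \<le> B\<close> by (intro psd_scale psd_idop) simp
  moreover have "(\<lambda>x y. tensor idop X x y - T x y)
      = (\<lambda>x y. complex_of_real (B * CARD('r \<times> 'a)) * idop x y - T x y)"
    by (auto simp: fun_eq_iff X_def tensor_app idop_def prod_eq_iff)
  then have "psd (\<lambda>x y. tensor idop X x y - T x y)"
    using psd_hermitian_shift[OF assms bound] by (simp only:)
  ultimately show ?thesis
    unfolding sdp_values_def by blast
qed

lemma Inf_sdp_values_zero: "Inf (sdp_values (\<lambda>x y. 0)) = 0"
proof (rule cInf_eq_minimum)
  show "0 \<in> sdp_values (\<lambda>x y. 0)"
    unfolding sdp_values_def
    by (rule CollectI, rule exI[of _ "\<lambda>a b. 0"]) (simp add: psd_zero tensor_app trace_def)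
qed (rule sdp_values_nonneg)

text \<open>The substitution \<open>X = p Y + c S\<close>; positivity of \<open>Y\<close> comes for free from block
  positivity of \<open>T\<close>.\<close>
lemma sdp_values_affine:
  fixes T :: "('r::finite \<times> 'a::finite) op" and S :: "'a op"
  assumes "block_positive T" and "psd S" and "0 < p" and "0 \<le> c"
  shows "sdp_values (\<lambda>x y. of_real p * T x y + of_real c * tensor idop S x y)
      = (\<lambda>t. p * t + c * Re (trace S)) ` sdp_values T"
proof -
  let ?X = "\<lambda>Y a b. complex_of_real p * Y a b + complex_of_real c * S a b"
  have constraint: "(\<lambda>x y. tensor idop (?X Y) x y - (of_real p * T x y + of_real c * tensor idop S x y))
      = (\<lambda>x y. complex_of_real p * (tensor idop Y x y - T x y))" for Y :: "'a op"
    by (auto simp: fun_eq_iff tensor_app algebra_simps)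
  have trace: "Re (trace (?X Y)) = p * Re (trace Y) + c * Re (trace S)" for Y
    by (simp add: trace_linear)
  have X_inv: "X = ?X (\<lambda>a b. complex_of_real (1 / p) * (X a b - c * S a b))" for X :: "'a op"
    using assms(3) by (auto simp: fun_eq_iff field_simps)
  show ?thesis
  proof (intro equalityI subsetI)
    fix t
    assume "t \<in> sdp_values (\<lambda>x y. of_real p * T x y + of_real c * tensor idop S x y)"
    then obtain X :: "'a op" where t: "t = Re (trace X)"
      and feasible: "psd (\<lambda>x y. tensor idop X x y - (of_real p * T x y + of_real c * tensor idop S x y))"
      unfolding sdp_values_def by blast
    define Y where "Y = (\<lambda>a b. complex_of_real (1 / p) * (X a b - c * S a b))"
    have X: "X = ?X Y"
      unfolding Y_def by (rule X_inv)
    have "psd (\<lambda>x y. tensor idop Y x y - T x y)"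
      using feasible unfolding X constraint psd_scale_iff[OF assms(3)] .
    moreover from this have "psd Y"
      by (rule psd_of_tensor_idop_ge[OF assms(1)])
    ultimately have "Re (trace Y) \<in> sdp_values T"
      unfolding sdp_values_def by (intro CollectI exI[where x = Y]) blast
    moreover have "t = p * Re (trace Y) + c * Re (trace S)"
      unfolding t X trace ..
    ultimately show "t \<in> (\<lambda>t. p * t + c * Re (trace S)) ` sdp_values T"
      by blast
  next
    fix t
    assume "t \<in> (\<lambda>t. p * t + c * Re (trace S)) ` sdp_values T"
    then obtain Y :: "'a op" where t: "t = p * Re (trace Y) + c * Re (trace S)"
      and "psd Y" and feasible: "psd (\<lambda>x y. tensor idop Y x y - T x y)"
      unfolding sdp_values_def by blast
    have "psd (?X Y)"
      using assms(2-4) \<open>psd Y\<close> by (intro psd_add psd_scale) auto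
    moreover have "psd (\<lambda>x y. tensor idop (?X Y) x y - (of_real p * T x y + of_real c * tensor idop S x y))"
      unfolding constraint psd_scale_iff[OF assms(3)] by (rule feasible)
    moreover have "t = Re (trace (?X Y))"
      unfolding t trace ..
    ultimately show "t \<in> sdp_values (\<lambda>x y. of_real p * T x y + of_real c * tensor idop S x y)"
      unfolding sdp_values_def by (intro CollectI exI[where x = "?X Y"]) blast
  qed
qed

lemma Inf_affine_image:
  fixes F :: "real set"
  assumes "F \<noteq> {}" and "bdd_below F" and "0 \<le> p"
  shows "Inf ((\<lambda>t. p * t + q) ` F) = p * Inf F + q"
  using continuous_at_Inf_mono[of "\<lambda>t. p * t + q" F] assms
  by (simp add: mono_def mult_left_mono continuous_intros)

lemma Inf_sdp_values_affine:
  fixes T :: "('r::finite \<times> 'a::finite) op" and S :: "'a op"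
  assumes "block_positive T" and "hermitian T" and "psd S" and "0 \<le> p" and "0 \<le> c"
  shows "Inf (sdp_values (\<lambda>x y. of_real p * T x y + of_real c * tensor idop S x y))
      = p * Inf (sdp_values T) + c * Re (trace S)"
proof -
  have pos: "Inf (sdp_values (\<lambda>x y. of_real p' * T' x y + of_real c * tensor idop S x y))
      = p' * Inf (sdp_values T') + c * Re (trace S)"
    if "block_positive T'" "hermitian T'" "0 < p'" for T' :: "('r \<times> 'a) op" and p'
  proof -
    have "bdd_below (sdp_values T')"
      by (rule bdd_belowI[of _ 0]) (rule sdp_values_nonneg)
    moreover have "sdp_values T' \<noteq> {}"
      using \<open>hermitian T'\<close> by (rule sdp_values_nonempty)
    ultimately show ?thesis
      using that assms(3,5) by (simp add: sdp_values_affine Inf_affine_image)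
  qed
  show ?thesis
  proof (cases "p = 0")
    case True
    \<comment> \<open>the substitution degenerates; read the matrix as \<open>1 \<cdot> 0 + c (1 \<otimes> S)\<close> instead\<close>
    have "block_positive (\<lambda>x y :: 'r \<times> 'a. 0)" "hermitian (\<lambda>x y :: 'r \<times> 'a. 0)"
      by (simp_all add: block_positive_def qform_def hermitian_def adj_def)
    from pos[OF this zero_less_one] True show ?thesis
      by (simp add: Inf_sdp_values_zero)
  next
    case False
    with assms pos show ?thesis
      by simp
  qed
qed

lemma twirl_tensor_depol:
  fixes \<eta> :: "'r::finite op" and \<tau> :: "'a::finite op"
  assumes "unitary_family \<mu> UR" and "unitary_family \<mu> UA"
  shows "twirl \<mu> UR UA (tensor (depol q \<eta>) \<tau>) = (\<lambda>x y. of_real q * twirl \<mu> UR UA (tensor \<eta> \<tau>) x y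
      + of_real ((1 - q) / CARD('r)) * tensor idop (twirl_by \<mu> UA \<tau>) x y)"
proof -
  have "tensor (depol q \<eta>) \<tau> = (\<lambda>x y. of_real q * tensor \<eta> \<tau> x y
      + of_real ((1 - q) / CARD('r)) * tensor idop \<tau> x y)"
    by (simp add: fun_eq_iff tensor_app depol_def algebra_simps)
  moreover have "\<And>g. g \<in> space \<mu> \<Longrightarrow> unitary_op (UR g)"
    using assms(1) by (simp add: unitary_family_def)
  ultimately show ?thesis
    unfolding twirl_eq_twirl_by
    by (simp only: twirl_by_linear[OF unitary_family_tensor[OF assms]] twirl_by_tensor_idop)
qed

theorem lemma10:
  fixes G :: "('g, 'b) monoid_scheme" and T :: "'g topology" and \<mu> :: "'g measure"
    and UR :: "'g \<Rightarrow> 'r::finite op" and UA :: "'g \<Rightarrow> 'a::finite op"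
    and \<eta> :: "'r op" and \<tau> :: "'a op" and p :: real
  assumes "compact_group_haar G T \<mu>"
    and "unitary_rep G T UR" and "unitary_rep G T UA"
    and "state \<eta>" and "state \<tau>"
    and "0 \<le> p" and "p \<le> 1"
  shows "Phi \<mu> UR UA (depol p \<eta>) \<tau>
           = p * Phi \<mu> UR UA \<eta> \<tau> + (1 - p) * Phi \<mu> UR UA (maxmixed :: 'r op) \<tau>
       \<and> p * Phi \<mu> UR UA \<eta> \<tau> + (1 - p) * Phi \<mu> UR UA (maxmixed :: 'r op) \<tau>
           = p * Phi \<mu> UR UA \<eta> \<tau> + (1 - p) / real CARD('r)"
proof -
  have UR: "unitary_family \<mu> UR" and UA: "unitary_family \<mu> UA"
    using assms(1-3) by (simp_all add: unitary_family_rep)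
  define S where "S = twirl_by \<mu> UA \<tau>"
  define T\<eta> where "T\<eta> = twirl \<mu> UR UA (tensor \<eta> \<tau>)"
  have "psd S" and "trace S = 1"
    using assms(5) UA by (simp_all add: S_def state_def psd_twirl_by trace_twirl_by)
  have "block_positive T\<eta>" and "hermitian T\<eta>"
    using assms(4,5) unitary_family_tensor[OF UR UA]
    by (simp_all add: T\<eta>_def state_def twirl_eq_twirl_by block_positive_tensor block_positive_twirl_by
        psd_hermitian hermitian_tensor hermitian_twirl_by)
  have Phi_depol: "Phi \<mu> UR UA (depol q \<eta>) \<tau> = q * Phi \<mu> UR UA \<eta> \<tau> + (1 - q) / CARD('r)"
    if "0 \<le> q" "q \<le> 1" for q
    using Inf_sdp_values_affine[OF \<open>block_positive T\<eta>\<close> \<open>hermitian T\<eta>\<close> \<open>psd S\<close>, of q "(1 - q) / CARD('r)"] that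
    by (simp add: Phi_eq_Inf_sdp_values twirl_tensor_depol[OF UR UA] \<open>trace S = 1\<close> flip: S_def T\<eta>_def)
  have "maxmixed = depol 0 \<eta>"
    by (simp add: fun_eq_iff maxmixed_def depol_def)
  then show ?thesis
    using Phi_depol[OF assms(6,7)] Phi_depol[of 0] by simp
qed

end
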